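(* In the meta-algorithm described in the context (with an arbitrary commitment subroutine), every corrupted search step $q$ whose current node $I^q$ is not a leaf satisfies $\Phi_{q+1}\le\Phi_q+1$.
   Context: Robust dynamic pricing: there are $T$ rounds and an unknown valuation $v^\star\in[0,1)$. At each round $t$ the seller posts $p_t\in[0,1]$; the true sale indicator is $y_t=\mathbbm 1\{p_t\le v^\star\}$, the seller observes $\sigma_t\in\{0,1\}$, and round $t$ is corrupted if $\sigma_t\neq y_t$. Meta-algorithm: let $D=\lceil\log_2 T\rceil$. Consider the complete binary tree of intervals of depth $D$ with root $[0,1)$, where each non-leaf node $[L,R)$ has children $[L,M)$ and $[M,R)$, $M=(L+R)/2$; the depth-$D$ nodes are the leaves, and $\ell^\star$ is the unique leaf containing $v^\star$. The algorithm keeps a current node $I$, initially the root. If $I=[L,R)$ is not a leaf, it performs a safety check — post $L$ and observe $\sigma_L$, post $R$ and observe $\sigma_R$; the check fails if $\sigma_L=0$ or $\sigma_R=1$ (by convention the query at $L=0$ and the query at $R=1$ always count as passing). On failure $I$ becomes its parent; otherwise it posts $M$, observes $\sigma_M$, and $I$ becomes $[M,R)$ if $\sigma_M=1$ and $[L,M)$ if $\sigma_M=0$. If $I$ is a leaf, a commitment subroutine is run on $I$; it posts prices on consecutive rounds and may return FAIL, in which case $I$ becomes its parent. Search steps: each iteration at a non-leaf node (safety check plus possible midpoint query) is one search step; each call of the commitment subroutine at a leaf is one search step. A search step is honest if none of its rounds is corrupted, and corrupted otherwise. $I^q$ is the current node at the start of search step $q$, and $\Phi_q=\mathrm{dist}(I^q,\ell^\star)$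 is the length of the shortest path between $I^q$ and $\ell^\star$ in the tree. *)

theory Defs
  imports Complex_Main
begin

text \<open>Nodes of the complete binary tree of dyadic intervals: a node (k, j) at depth k
  with j < 2^k is the interval [j / 2^k, (j+1) / 2^k).  The root is (0, 0).\<close>

type_synonym node = "nat \<times> nat"

definition tree_depth :: "nat \<Rightarrow> nat" where
  "tree_depth T = nat \<lceil>log 2 (real T)\<rceil>"

definition is_node :: "nat \<Rightarrow> node \<Rightarrow> bool" where
  "is_node D I \<longleftrightarrow> fst I \<le> D \<and> snd I < 2 ^ fst I"

definition is_leaf :: "nat \<Rightarrow> node \<Rightarrow> bool" where
  "is_leaf D I \<longleftrightarrow> is_node D I \<and> fst I = D"

definition nodeL :: "node \<Rightarrow> real" where
  "nodeL I = real (snd I) / 2 ^ fst I"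

definition nodeR :: "node \<Rightarrow> real" where
  "nodeR I = real (snd I + 1) / 2 ^ fst I"

definition nodeM :: "node \<Rightarrow> real" where
  "nodeM I = (nodeL I + nodeR I) / 2"

definition parent :: "node \<Rightarrow> node" where
  "parent I = (fst I - 1, snd I div 2)"

definition left_child :: "node \<Rightarrow> node" where
  "left_child I = (fst I + 1, 2 * snd I)"

definition right_child :: "node \<Rightarrow> node" where
  "right_child I = (fst I + 1, 2 * snd I + 1)"

definition tree_edge :: "nat \<Rightarrow> node \<Rightarrow> node \<Rightarrow> bool" where
  "tree_edge D a b \<longleftrightarrow> is_node D a \<and> is_node D b \<and>
     ((fst b = fst a + 1 \<and> snd b div 2 = snd a) \<or> (fst a = fst b + 1 \<and> snd a div 2 = snd b))"

definition tree_dist :: "nat \<Rightarrow> node \<Rightarrow> node \<Rightarrow> nat" where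
  "tree_dist D a b = (LEAST n. (a, b) \<in> {(x, y). tree_edge D x y} ^^ n)"

definition leaf_of :: "nat \<Rightarrow> real \<Rightarrow> node" where
  "leaf_of D v = (D, nat \<lfloor>v * 2 ^ D\<rfloor>)"

definition sale :: "real \<Rightarrow> real \<Rightarrow> bool" where
  "sale v p \<longleftrightarrow> p \<le> v"

definition check_pass :: "node \<Rightarrow> bool \<Rightarrow> bool \<Rightarrow> bool" where
  "check_pass I sL sR \<longleftrightarrow> (nodeL I = 0 \<or> sL) \<and> (nodeR I = 1 \<or> \<not> sR)"

definition search_step :: "node \<Rightarrow> bool \<Rightarrow> bool \<Rightarrow> bool \<Rightarrow> node" where
  "search_step I sL sR sM =
     (if \<not> check_pass I sL sR then parent I
      else if sM then right_child I else left_child I)"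

text \<open>The step is corrupted if some of its posted rounds has an observation different
  from the true sale indicator (the midpoint is posted only if the check passes).\<close>
definition step_corrupted :: "real \<Rightarrow> node \<Rightarrow> bool \<Rightarrow> bool \<Rightarrow> bool \<Rightarrow> bool" where
  "step_corrupted v I sL sR sM \<longleftrightarrow>
     sL \<noteq> sale v (nodeL I) \<or> sR \<noteq> sale v (nodeR I) \<or>
     (check_pass I sL sR \<and> sM \<noteq> sale v (nodeM I))"

end

theory Submission
  imports Defs
begin

text \<open>A search step at a non-leaf node moves to its parent (or stays at the root, whose
  parent is itself) or to one of its children, i.e. along at most one edge of the tree.
  Shortest-path distance is 1-Lipschitz along edges, so the potential grows by at most one.
  This holds for every step, corrupted or not.\<close>

lemma Least_relpow_le_Suc_if_step:
  assumes "sym R" and "(a, b) \<in> R"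
  shows "(LEAST n. (a, c) \<in> R ^^ n) \<le> (LEAST n. (b, c) \<in> R ^^ n) + 1"
proof (cases "\<exists>n. (b, c) \<in> R ^^ n")
  case True
  then have "(b, c) \<in> R ^^ (LEAST n. (b, c) \<in> R ^^ n)" by (rule LeastI_ex)
  then have "(a, c) \<in> R ^^ Suc (LEAST n. (b, c) \<in> R ^^ n)"
    by (rule relpow_Suc_I2[OF assms(2)])
  then show ?thesis by (simp add: Least_le)
next
  case False
  \<comment> \<open>Unreachable target: both sides are the junk value LEAST of the same empty predicate.\<close>
  have "(b, a) \<in> R" using assms by (simp add: symD)
  then have "(a, c) \<notin> R ^^ n" for n
    using False by (meson relpow_Suc_I2)
  then have "(\<lambda>n. (a, c) \<in> R ^^ n) = (\<lambda>n. (b, c) \<in> R ^^ n)" using False by auto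
  then show ?thesis by simp
qed

lemma sym_tree_edge: "sym {(x, y). tree_edge D x y}"
  unfolding sym_def tree_edge_def by auto

lemma tree_dist_le_Suc_if_tree_edge:
  "tree_edge D a b \<Longrightarrow> tree_dist D a c \<le> tree_dist D b c + 1"
  unfolding tree_dist_def by (rule Least_relpow_le_Suc_if_step[OF sym_tree_edge]) simp

lemma parent_root: "is_node D I \<Longrightarrow> fst I = 0 \<Longrightarrow> parent I = I"
  unfolding is_node_def parent_def by (cases I) simp

lemma tree_edge_parent: "is_node D I \<Longrightarrow> fst I \<noteq> 0 \<Longrightarrow> tree_edge D (parent I) I"
  unfolding is_node_def parent_def tree_edge_def
  by (cases I) (auto simp: less_mult_imp_div_less power_eq_if)

lemma
  assumes "is_node D I" and "\<not> is_leaf D I"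
  shows tree_edge_left_child: "tree_edge D (left_child I) I"
    and tree_edge_right_child: "tree_edge D (right_child I) I"
  using assms unfolding is_node_def is_leaf_def left_child_def right_child_def tree_edge_def
  by auto

lemma search_step_adjacent:
  assumes "is_node D I" and "\<not> is_leaf D I"
  shows "search_step I sL sR sM = I \<or> tree_edge D (search_step I sL sR sM) I"
proof (cases "fst I = 0")
  case True
  then show ?thesis using assms tree_edge_left_child tree_edge_right_child parent_root
    by (simp add: search_step_def)
next
  case False
  then show ?thesis using assms tree_edge_left_child tree_edge_right_child tree_edge_parent
    by (simp add: search_step_def)
qed

theorem lemma3p2:
  fixes T :: nat and v :: real and I :: node and sL sR sM :: bool
  assumes "T \<ge> 1"
    and "0 \<le> v" and "v < 1"
    and "is_node (tree_depth T) I"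
    and "\<not> is_leaf (tree_depth T) I"
    and "step_corrupted v I sL sR sM"
  shows "tree_dist (tree_depth T) (search_step I sL sR sM) (leaf_of (tree_depth T) v)
         \<le> tree_dist (tree_depth T) I (leaf_of (tree_depth T) v) + 1"
  using search_step_adjacent[OF assms(4,5), of sL sR sM] tree_dist_le_Suc_if_tree_edge
  by (elim disjE) simp_all

end
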